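(* For $\beta>2$ let $E_\beta(z)=\prod_{n=1}^\infty\Big(1-\frac{z}{n^\beta-i}\Big)$. Then there are constants $0<C_1\le C_2$ and $R>0$ such that $C_1|x|^{1/\beta}\le\log|E_\beta(x)|\le C_2|x|^{1/\beta}$ for all real $x$ with $|x|>R$. *)

theory Defs
  imports "HOL-Analysis.Analysis"
begin

definition E_beta :: "real \<Rightarrow> complex \<Rightarrow> complex" where
  "E_beta \<beta> z = (\<Prod>k. 1 - z / (complex_of_real (real (Suc k) powr \<beta>) - \<i>))"

end

theory Submission
  imports Defs
begin

(* ln |E_beta x| is the sum over n of ln |1 - x / (n^beta - i)|, which equals ln |1 - x / n^beta| up to
   an error bounded by 1 / (2 n^(2 beta)), summable in n. Put N = |x|^(1/beta). For n <= N the term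
   is about beta ln (N / n), and these sum to about beta N by Stirling; for n > N it is at most
   |x| / n^beta, and these sum to O(N). This gives the upper bound, and the lower bound for x < 0,
   where every term is at least ln 2 for n <= N and nonnegative otherwise.
   For x > 0 the two factors with n next to N may be close to 0 and are only bounded by -O(ln x).
   The others contribute beta ln (N / n) + ln (1 - (n/N)^beta) for n < N and ln (1 - (N/n)^beta) for
   n > N. Expanding ln (1 - z) = - sum_k z^k / k and comparing the power sums with integrals bounds
   the total loss by N sum_{k >= 1} 2 beta / ((beta k)^2 - 1) = (beta - pi cot (pi / beta)) N, so
   ln |E_beta x| >= pi cot (pi / beta) N - O(ln N), and pi cot (pi / beta) > 0 because beta > 2. *)

lemma powr_succ_diff_ge:
  fixes p t :: real
  assumes "p > 0" "t > 0"
  shows "(p + 1) * t powr p \<le> (t + 1) powr (p + 1) - t powr (p + 1)"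
proof -
  have "((\<lambda>z. z powr (p + 1)) has_real_derivative (p + 1) * z powr (p + 1 - 1)) (at z)"
    if "t \<le> z" for z
    using assms that by (intro has_real_derivative_powr) auto
  then obtain z where z: "t < z"
    "(t + 1) powr (p + 1) - t powr (p + 1) = (t + 1 - t) * ((p + 1) * z powr (p + 1 - 1))"
    using MVT2[of t "t + 1" "\<lambda>z. z powr (p + 1)"] by fastforce
  have "t powr p \<le> z powr p"
    using z assms by (intro powr_mono2) auto
  then show ?thesis
    using z assms by simp
qed

lemma powr_pred_diff_ge:
  fixes p t :: real
  assumes "p > 1" "t > 1"
  shows "(p - 1) * t powr (- p) \<le> (t - 1) powr (1 - p) - t powr (1 - p)"
proof -
  have "((\<lambda>z. z powr (1 - p)) has_real_derivative (1 - p) * z powr (1 - p - 1)) (at z)"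
    if "t - 1 \<le> z" for z
    using assms that by (intro has_real_derivative_powr) auto
  then obtain z where z: "t - 1 < z" "z < t"
    "t powr (1 - p) - (t - 1) powr (1 - p) = (t - (t - 1)) * ((1 - p) * z powr (1 - p - 1))"
    using MVT2[of "t - 1" t "\<lambda>z. z powr (1 - p)"] by fastforce
  have "t powr (- p) \<le> z powr (- p)"
    using z assms by (intro powr_mono2') auto
  with assms have "(p - 1) * t powr (- p) \<le> (p - 1) * z powr (- p)"
    by (intro mult_left_mono) auto
  then show ?thesis
    using z by (simp add: algebra_simps)
qed

lemma sum_powr_le:
  fixes p :: real
  assumes "p > 0"
  shows "(\<Sum>n=1..j. real n powr p) \<le> ((real j + 1) powr (p + 1) - 1) / (p + 1)"
proof (induction j)
  case 0
  then show ?case by simp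
next
  case (Suc j)
  have "(p + 1) * (real j + 1) powr p \<le> (real j + 2) powr (p + 1) - (real j + 1) powr (p + 1)"
    using powr_succ_diff_ge[of p "real j + 1"] assms by (simp add: add.assoc)
  with Suc assms show ?case
    by (simp add: field_simps)
qed

lemma sum_powr_neg_tail_le:
  fixes p :: real
  assumes "p > 1" "j \<ge> 1"
  shows "(\<Sum>n\<in>{j<..M}. real n powr (- p)) \<le> real j powr (1 - p) / (p - 1)"
proof -
  have telescoped: "(\<Sum>n\<in>{j<..M}. real n powr (- p)) \<le> (real j powr (1 - p) - real M powr (1 - p)) / (p - 1)"
    if "j \<le> M" for M
    using that
  proof (induction M rule: dec_induct)
    case base
    then show ?case by simp
  next
    case (step M)
    have "(p - 1) * (real M + 1) powr (- p) \<le> real M powr (1 - p) - (real M + 1) powr (1 - p)"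
      using powr_pred_diff_ge[of p "real M + 1"] assms step by simp
    moreover have "{j<..Suc M} = insert (Suc M) {j<..M}"
      using step by auto
    ultimately show ?case
      using step assms by (simp add: field_simps)
  qed
  show ?thesis
  proof (cases "j \<le> M")
    case True
    have "0 \<le> real M powr (1 - p) / (p - 1)"
      using assms by simp
    with telescoped[OF True] show ?thesis
      by (simp add: diff_divide_distrib)
  qed (use assms in simp)
qed

lemma sum_ln_le: "(\<Sum>n=1..j. ln (real n)) \<le> (real j + 1) * ln (real j + 1) - real j"
proof (induction j)
  case 0
  then show ?case by simp
next
  case (Suc j)
  have "ln ((real j + 1) / (real j + 2)) \<le> (real j + 1) / (real j + 2) - 1"
    by (rule ln_le_minus_one) auto
  then have "1 \<le> (real j + 2) * (ln (real j + 2) - ln (real j + 1))"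
    by (simp add: ln_div field_simps)
  with Suc show ?case
    by (simp add: algebra_simps)
qed

lemma sum_ln_ge: "real j * ln (real j) - real j \<le> (\<Sum>n=1..j. ln (real n))"
proof (induction j)
  case 0
  then show ?case by simp
next
  case (Suc j)
  show ?case
  proof (cases "j = 0")
    case False
    have "ln ((real j + 1) / real j) \<le> (real j + 1) / real j - 1"
      using False by (intro ln_le_minus_one) auto
    then have "real j * (ln (real j + 1) - ln (real j)) \<le> 1"
      using False by (simp add: ln_div field_simps)
    with Suc show ?thesis
      by (simp add: algebra_simps)
  qed simp
qed

lemma sum_ln_one_minus_ge:
  fixes z :: "'a \<Rightarrow> real" and c :: "nat \<Rightarrow> real"
  assumes "finite F" and z: "\<And>n. n \<in> F \<Longrightarrow> 0 \<le> z n \<and> z n < 1"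
    and moments: "\<And>k. (\<Sum>n\<in>F. z n ^ Suc k) / real (Suc k) \<le> c k" and "summable c"
  shows "- (\<Sum>k. c k) \<le> (\<Sum>n\<in>F. ln (1 - z n))"
proof -
  have series: "(\<lambda>k. z n ^ Suc k / real (Suc k)) sums (- ln (1 - z n))" if "n \<in> F" for n
  proof -
    have "(\<lambda>k. - ((- (- z n)) ^ k) / real k) sums ln (1 + - z n)"
      using z[OF that] by (intro ln_series') auto
    then have "(\<lambda>k. - (z n ^ Suc k) / real (Suc k)) sums ln (1 - z n)"
      by (subst sums_Suc_iff) simp
    from sums_minus[OF this] show ?thesis
      by simp
  qed
  have "(\<Sum>n\<in>F. - ln (1 - z n)) = (\<Sum>k. \<Sum>n\<in>F. z n ^ Suc k / real (Suc k))"
    using series by (subst suminf_sum) (auto simp: sums_iff)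
  also have "\<dots> \<le> (\<Sum>k. c k)"
    using series moments \<open>summable c\<close>
    by (intro suminf_le summable_sum) (auto simp: sums_iff sum_divide_distrib)
  finally show ?thesis
    by (simp add: sum_negf)
qed

(* cot_pf_sum beta = beta - pi cot (pi / beta) by the partial fraction expansion of the cotangent;
   the elementary bound cot_pf_sum_less is all that is needed. *)
definition cot_pf_sum :: "real \<Rightarrow> real" where
  "cot_pf_sum \<beta> = (\<Sum>k. 2 * \<beta> / ((\<beta> * real (Suc k))\<^sup>2 - 1))"

lemma cot_pf_term_bounds:
  fixes \<beta> s :: real
  assumes "\<beta> > 2" "s \<ge> 1"
  shows "0 < 2 * \<beta> / ((\<beta> * s)\<^sup>2 - 1)"
    and "2 * \<beta> / ((\<beta> * s)\<^sup>2 - 1) < \<beta> / (2 * s - 1) - \<beta> / (2 * s + 1)"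
proof -
  have gap: "4 * s\<^sup>2 < (\<beta> * s)\<^sup>2"
    using assms by (simp add: power_mult_distrib power_strict_mono[of 2 \<beta> 2, simplified])
  have pos: "4 * s\<^sup>2 - 1 > 0"
    using one_le_power[of s 2] assms by linarith
  show "0 < 2 * \<beta> / ((\<beta> * s)\<^sup>2 - 1)"
    using assms gap pos by simp
  have "2 * \<beta> / ((\<beta> * s)\<^sup>2 - 1) < 2 * \<beta> / (4 * s\<^sup>2 - 1)"
    using assms gap pos by (intro divide_strict_left_mono mult_pos_pos) auto
  also have "\<dots> = \<beta> / (2 * s - 1) - \<beta> / (2 * s + 1)"
    using assms by (simp add: field_simps power2_eq_square)
  finally show "2 * \<beta> / ((\<beta> * s)\<^sup>2 - 1) < \<beta> / (2 * s - 1) - \<beta> / (2 * s + 1)" .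
qed

lemma
  fixes \<beta> :: real
  assumes "\<beta> > 2"
  shows summable_cot_pf: "summable (\<lambda>k. 2 * \<beta> / ((\<beta> * real (Suc k))\<^sup>2 - 1))"
    and cot_pf_sum_less: "cot_pf_sum \<beta> < \<beta>"
proof -
  define t where "t k = \<beta> / (2 * real k + 1) - \<beta> / (2 * real (Suc k) + 1)" for k
  have "(\<lambda>k. \<beta> / (2 * real k + 1)) \<longlonglongrightarrow> 0"
    by real_asymp
  then have t_sums: "t sums \<beta>"
    unfolding t_def using telescope_sums' by fastforce
  have term_bounds: "0 < 2 * \<beta> / ((\<beta> * real (Suc k))\<^sup>2 - 1)"
    "2 * \<beta> / ((\<beta> * real (Suc k))\<^sup>2 - 1) < t k" for k
    using cot_pf_term_bounds[OF assms, of "real (Suc k)"] by (auto simp: t_def add.commute)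
  show summable: "summable (\<lambda>k. 2 * \<beta> / ((\<beta> * real (Suc k))\<^sup>2 - 1))"
  proof (rule summable_comparison_test'[OF sums_summable[OF t_sums]])
    show "norm (2 * \<beta> / ((\<beta> * real (Suc k))\<^sup>2 - 1)) \<le> t k" for k
      using term_bounds[of k] by (simp only: real_norm_def abs_of_pos less_imp_le)
  qed
  have "0 < (\<Sum>k. t k - 2 * \<beta> / ((\<beta> * real (Suc k))\<^sup>2 - 1))"
    using term_bounds by (intro suminf_pos summable_diff sums_summable[OF t_sums] summable) auto
  then show "cot_pf_sum \<beta> < \<beta>"
    unfolding cot_pf_sum_def
    using suminf_diff[OF sums_summable[OF t_sums] summable] t_sums by (simp add: sums_iff)
qed

definition log_factor :: "real \<Rightarrow> real \<Rightarrow> real" where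
  "log_factor a x = ln (sqrt ((a - x)\<^sup>2 + 1)) - ln (sqrt (a\<^sup>2 + 1))"

lemma norm_factor:
  "cmod (1 - complex_of_real x / (complex_of_real a - \<i>)) = sqrt ((a - x)\<^sup>2 + 1) / sqrt (a\<^sup>2 + 1)"
proof -
  have "complex_of_real a - \<i> \<noteq> 0"
    by (simp add: complex_eq_iff)
  then have "1 - complex_of_real x / (complex_of_real a - \<i>) = Complex (a - x) (- 1) / Complex a (- 1)"
    by (simp add: field_simps complex_eq_iff Complex_eq)
  then show ?thesis
    by (simp only: norm_divide) (simp add: cmod_def)
qed

lemma ln_norm_factor:
  "ln (cmod (1 - complex_of_real x / (complex_of_real a - \<i>))) = log_factor a x"
  unfolding log_factor_def norm_factor by (intro ln_divide_pos; simp add: add_nonneg_pos)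

lemma LIMSEQ_sum_log_factor_E_beta:
  fixes \<beta> x :: real
  assumes "\<beta> > 1"
  shows "(\<lambda>M. \<Sum>n=1..M. log_factor (real n powr \<beta>) x) \<longlonglongrightarrow> ln (cmod (E_beta \<beta> (complex_of_real x)))"
proof -
  define f where "f k = 1 - complex_of_real x / (complex_of_real (real (Suc k) powr \<beta>) - \<i>)" for k
  have bound: "norm (f k - 1) \<le> \<bar>x\<bar> * real (Suc k) powr (- \<beta>)" for k
  proof -
    define a where "a = real (Suc k) powr \<beta>"
    have "0 < a" "a \<le> cmod (complex_of_real a - \<i>)"
      using complex_Re_le_cmod[of "complex_of_real a - \<i>"] by (auto simp: a_def)
    then have "\<bar>x\<bar> / cmod (complex_of_real a - \<i>) \<le> \<bar>x\<bar> / a"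
      by (intro divide_left_mono mult_pos_pos) auto
    then have "norm (f k - 1) \<le> \<bar>x\<bar> / a"
      unfolding f_def a_def[symmetric] by (simp add: norm_divide)
    also have "\<bar>x\<bar> / a = \<bar>x\<bar> * real (Suc k) powr (- \<beta>)"
      unfolding a_def by (simp add: powr_minus_divide)
    finally show ?thesis .
  qed
  have "summable (\<lambda>n. real n powr (- \<beta>))"
    using assms by (simp add: summable_real_powr_iff)
  then have "summable (\<lambda>k. \<bar>x\<bar> * real (Suc k) powr (- \<beta>))"
    by (intro summable_mult) (subst summable_Suc_iff)
  then have "summable (\<lambda>k. norm (f k - 1))"
    by (rule summable_comparison_test') (use bound in auto)
  then have "convergent_prod f"
    by (intro abs_convergent_prod_imp_convergent_prod summable_imp_abs_convergent_prod)
  then have "(\<lambda>k. cmod (f k)) has_prod cmod (E_beta \<beta> (complex_of_real x))"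
    unfolding E_beta_def f_def[symmetric] by (intro has_prod_norm convergent_prod_has_prod)
  moreover have "cmod (f k) > 0" for k
    unfolding f_def norm_factor by (intro divide_pos_pos) (auto intro: add_nonneg_pos)
  ultimately have "(\<lambda>k. ln (cmod (f k))) sums ln (cmod (E_beta \<beta> (complex_of_real x)))"
    by (rule has_prod_imp_sums_ln_real')
  moreover have "(\<Sum>k<M. ln (cmod (f k))) = (\<Sum>n=1..M. log_factor (real n powr \<beta>) x)" for M
    using sum.atLeast1_atMost_eq[of "\<lambda>n. log_factor (real n powr \<beta>) x" M]
    by (simp add: f_def ln_norm_factor)
  ultimately show ?thesis
    by (simp add: sums_def)
qed

lemma log_factor_le:
  assumes "a > 0"
  shows "log_factor a x \<le> ln (1 + \<bar>x\<bar> / a)"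
proof -
  define q where "q = 1 + \<bar>x\<bar> / a"
  have q: "1 \<le> q" "a * q = a + \<bar>x\<bar>"
    using assms by (auto simp: q_def field_simps)
  have "\<bar>a - x\<bar> \<le> a * q"
    using assms q by auto
  then have "(a - x)\<^sup>2 \<le> (a * q)\<^sup>2"
    using power_mono[of "\<bar>a - x\<bar>" "a * q" 2] by simp
  moreover have "1 \<le> q\<^sup>2"
    using q by (simp add: one_le_power)
  ultimately have "(a - x)\<^sup>2 + 1 \<le> q\<^sup>2 * (a\<^sup>2 + 1)"
    by (simp add: power_mult_distrib algebra_simps)
  then have "sqrt ((a - x)\<^sup>2 + 1) \<le> q * sqrt (a\<^sup>2 + 1)"
    using q by (metis real_sqrt_le_mono real_sqrt_mult real_sqrt_abs abs_of_nonneg order.trans zero_le_one)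
  then have "ln (sqrt ((a - x)\<^sup>2 + 1)) \<le> ln (q * sqrt (a\<^sup>2 + 1))"
    using q by (subst ln_le_cancel_iff) (auto intro!: mult_pos_pos add_nonneg_pos)
  also have "\<dots> = ln q + ln (sqrt (a\<^sup>2 + 1))"
    using q by (intro ln_mult_pos) (auto intro: add_nonneg_pos)
  finally show ?thesis
    unfolding log_factor_def q_def by simp
qed

lemma log_factor_ge:
  assumes "a > 0" "a \<noteq> x"
  shows "ln \<bar>a - x\<bar> - ln a - 1 / (2 * a\<^sup>2) \<le> log_factor a x"
proof -
  have "\<bar>a - x\<bar> \<le> sqrt ((a - x)\<^sup>2 + 1)"
    by (metis real_sqrt_abs real_sqrt_le_mono le_add_same_cancel1 zero_le_one)
  then have "ln \<bar>a - x\<bar> \<le> ln (sqrt ((a - x)\<^sup>2 + 1))"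
    using assms by (subst ln_le_cancel_iff) (auto intro: add_nonneg_pos)
  moreover have "ln (sqrt (a\<^sup>2 + 1)) \<le> ln a + 1 / (2 * a\<^sup>2)"
  proof -
    have "a\<^sup>2 + 1 = a\<^sup>2 * (1 + 1 / a\<^sup>2)"
      using assms by (simp add: field_simps)
    then have "ln (a\<^sup>2 + 1) = ln (a\<^sup>2 * (1 + 1 / a\<^sup>2))"
      by (rule arg_cong)
    also have "\<dots> = ln (a\<^sup>2) + ln (1 + 1 / a\<^sup>2)"
      using assms by (intro ln_mult_pos) (auto intro: add_pos_nonneg)
    also have "ln (1 + 1 / a\<^sup>2) \<le> 1 / a\<^sup>2"
      using assms by (intro ln_add_one_self_le_self) auto
    finally show ?thesis
      using assms by (simp add: ln_sqrt add_pos_nonneg ln_realpow field_simps)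
  qed
  ultimately show ?thesis
    unfolding log_factor_def by linarith
qed

lemma log_factor_ge_above:
  assumes "0 < a" "x < a"
  shows "ln (1 - x / a) - 1 / (2 * a\<^sup>2) \<le> log_factor a x"
proof -
  have "\<bar>a - x\<bar> = a * (1 - x / a)"
    using assms by (simp add: field_simps)
  then have "ln \<bar>a - x\<bar> = ln a + ln (1 - x / a)"
    using assms by (simp add: ln_mult_pos)
  then show ?thesis
    using log_factor_ge[of a x] assms by simp
qed

lemma log_factor_ge_below:
  assumes "0 < a" "a < x"
  shows "ln x - ln a + ln (1 - a / x) - 1 / (2 * a\<^sup>2) \<le> log_factor a x"
proof -
  have "\<bar>a - x\<bar> = x * (1 - a / x)"
    using assms by (simp add: field_simps)
  then have "ln \<bar>a - x\<bar> = ln x + ln (1 - a / x)"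
    using assms by (simp add: ln_mult_pos)
  then show ?thesis
    using log_factor_ge[of a x] assms by simp
qed

lemma log_factor_ge_neg_ln:
  assumes "a \<ge> 0"
  shows "- ln (a + 1) \<le> log_factor a x"
proof -
  have "sqrt (a\<^sup>2 + 1) \<le> a + 1"
    using assms by (intro real_le_lsqrt) (auto simp: power2_eq_square algebra_simps)
  then have "ln (sqrt (a\<^sup>2 + 1)) \<le> ln (a + 1)"
    using assms by (subst ln_le_cancel_iff) (auto intro: add_nonneg_pos)
  moreover have "0 \<le> ln (sqrt ((a - x)\<^sup>2 + 1))"
    by simp
  ultimately show ?thesis
    unfolding log_factor_def by linarith
qed

lemma sum_inverse_powr_sq_le:
  fixes \<beta> :: real
  assumes "\<beta> \<ge> 1" "F \<subseteq> {1..M}"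
  shows "(\<Sum>n\<in>F. 1 / (2 * (real n powr \<beta>)\<^sup>2)) \<le> 1"
proof -
  have "(\<Sum>n\<in>F. 1 / (2 * (real n powr \<beta>)\<^sup>2)) = (\<Sum>n\<in>F. real n powr (- (2 * \<beta>))) / 2"
    unfolding sum_divide_distrib
  proof (rule sum.cong)
    show "1 / (2 * (real n powr \<beta>)\<^sup>2) = real n powr (- (2 * \<beta>)) / 2" if "n \<in> F" for n
      using that assms by (auto simp: powr_power powr_minus_divide mult.commute)
  qed simp
  also have "(\<Sum>n\<in>F. real n powr (- (2 * \<beta>))) \<le> (\<Sum>n\<in>insert 1 {1<..M}. real n powr (- (2 * \<beta>)))"
    using assms by (intro sum_mono2) auto
  also have "\<dots> = 1 + (\<Sum>n\<in>{1<..M}. real n powr (- (2 * \<beta>)))"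
    by simp
  also have "\<dots> \<le> 1 + 1 / (2 * \<beta> - 1)"
    using sum_powr_neg_tail_le[of "2 * \<beta>" 1 M] assms by simp
  also have "\<dots> \<le> 2"
    using assms by simp
  finally show ?thesis
    by simp
qed

lemma sum_ln_one_plus_head_le:
  fixes \<beta> S :: real
  assumes "\<beta> > 0" "1 \<le> m" "real m \<le> S"
  shows "(\<Sum>n=1..m. ln (1 + S powr \<beta> / real n powr \<beta>)) \<le> (ln 2 + \<beta>) * S"
proof -
  have S: "1 \<le> S" "0 < real m"
    using assms by auto
  have "ln (1 + S powr \<beta> / real n powr \<beta>) \<le> ln 2 + \<beta> * ln S - \<beta> * ln (real n)"
    if n: "n \<in> {1..m}" for n
  proof -
    have "real n powr \<beta> \<le> S powr \<beta>"
      using n assms by (intro powr_mono2) auto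
    then have "1 \<le> S powr \<beta> / real n powr \<beta>"
      using n by simp
    then have "ln (1 + S powr \<beta> / real n powr \<beta>) \<le> ln (2 * (S powr \<beta> / real n powr \<beta>))"
      by simp
    also have "\<dots> = ln 2 + \<beta> * ln S - \<beta> * ln (real n)"
      using n S by (simp add: ln_mult_pos ln_divide_pos ln_powr)
    finally show ?thesis .
  qed
  then have "(\<Sum>n=1..m. ln (1 + S powr \<beta> / real n powr \<beta>))
      \<le> (\<Sum>n=1..m. ln 2 + \<beta> * ln S - \<beta> * ln (real n))"
    by (rule sum_mono)
  also have "\<dots> = real m * ln 2 + \<beta> * (real m * ln S - (\<Sum>n=1..m. ln (real n)))"
    by (simp add: sum_subtractf sum.distrib sum_distrib_left algebra_simps)
  also have "\<dots> \<le> real m * ln 2 + \<beta> * (real m * (ln S - ln (real m)) + real m)"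
    using sum_ln_ge[of m] assms by (intro add_left_mono mult_left_mono) (auto simp: algebra_simps)
  also have "\<dots> \<le> S * ln 2 + \<beta> * S"
  proof -
    have "ln (S / real m) \<le> S / real m - 1"
      using S by (intro ln_le_minus_one) auto
    then have "real m * (ln S - ln (real m)) \<le> S - real m"
      using S by (simp add: ln_divide_pos field_simps)
    then show ?thesis
      using assms by (intro add_mono mult_right_mono mult_left_mono) auto
  qed
  finally show ?thesis
    by (simp add: algebra_simps)
qed

lemma sum_ln_one_plus_tail_le:
  fixes \<beta> S :: real
  assumes "\<beta> > 1" "1 \<le> m" "0 < S" "S \<le> real m + 1"
  shows "(\<Sum>n\<in>{m<..M}. ln (1 + S powr \<beta> / real n powr \<beta>)) \<le> 2 powr (\<beta> - 1) / (\<beta> - 1) * S"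
proof -
  have "(\<Sum>n\<in>{m<..M}. ln (1 + S powr \<beta> / real n powr \<beta>)) \<le> (\<Sum>n\<in>{m<..M}. S powr \<beta> * real n powr (- \<beta>))"
    by (intro sum_mono) (simp add: ln_add_one_self_le_self powr_minus divide_inverse)
  also have "\<dots> = S powr \<beta> * (\<Sum>n\<in>{m<..M}. real n powr (- \<beta>))"
    by (simp add: sum_distrib_left)
  also have "\<dots> \<le> S powr \<beta> * (real m powr (1 - \<beta>) / (\<beta> - 1))"
    using sum_powr_neg_tail_le[of \<beta> m M] assms by (intro mult_left_mono) auto
  also have "real m powr (1 - \<beta>) \<le> (S / 2) powr (1 - \<beta>)"
    using assms by (intro powr_mono2') auto
  also have "S powr \<beta> * ((S / 2) powr (1 - \<beta>) / (\<beta> - 1)) = 2 powr (\<beta> - 1) / (\<beta> - 1) * S"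
    using assms by (simp add: powr_divide powr_diff powr_add[symmetric] field_simps)
  finally show ?thesis
    using assms by (simp add: mult_left_mono divide_right_mono)
qed

lemma sum_log_factor_le:
  fixes \<beta> x :: real
  assumes "\<beta> > 1" "\<bar>x\<bar> \<ge> 1"
  shows "(\<Sum>n=1..M. log_factor (real n powr \<beta>) x)
    \<le> (ln 2 + \<beta> + 2 powr (\<beta> - 1) / (\<beta> - 1)) * \<bar>x\<bar> powr (1 / \<beta>)"
proof -
  define S where "S = \<bar>x\<bar> powr (1 / \<beta>)"
  define m where "m = nat \<lfloor>S\<rfloor>"
  define \<phi> where "\<phi> n = ln (1 + S powr \<beta> / real n powr \<beta>)" for n
  have S: "1 \<le> S" "S powr \<beta> = \<bar>x\<bar>"
    using assms by (auto simp: S_def ge_one_powr_ge_zero powr_powr)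
  have m: "1 \<le> m" "real m \<le> S" "S \<le> real m + 1"
    using S by (auto simp: m_def le_nat_iff le_floor_iff)
  have "(\<Sum>n=1..M. log_factor (real n powr \<beta>) x) \<le> (\<Sum>n=1..M. \<phi> n)"
    using log_factor_le by (intro sum_mono) (simp add: \<phi>_def S)
  also have "\<dots> \<le> (\<Sum>n\<in>{1..m} \<union> {m<..M}. \<phi> n)"
    by (intro sum_mono2) (auto simp: \<phi>_def)
  also have "\<dots> = (\<Sum>n=1..m. \<phi> n) + (\<Sum>n\<in>{m<..M}. \<phi> n)"
    by (intro sum.union_disjoint) auto
  also have "\<dots> \<le> (ln 2 + \<beta>) * S + 2 powr (\<beta> - 1) / (\<beta> - 1) * S"
    unfolding \<phi>_def using assms S m
    by (intro add_mono sum_ln_one_plus_head_le sum_ln_one_plus_tail_le) auto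
  finally show ?thesis
    by (simp add: S_def algebra_simps)
qed

lemma ln_norm_E_beta_le:
  fixes \<beta> x :: real
  assumes "\<beta> > 1" "\<bar>x\<bar> \<ge> 1"
  shows "ln (cmod (E_beta \<beta> (complex_of_real x)))
    \<le> (ln 2 + \<beta> + 2 powr (\<beta> - 1) / (\<beta> - 1)) * \<bar>x\<bar> powr (1 / \<beta>)"
  by (rule LIMSEQ_le_const2[OF LIMSEQ_sum_log_factor_E_beta[OF assms(1)]])
    (use sum_log_factor_le[OF assms] in blast)

lemma sum_log_factor_neg_ge:
  fixes \<beta> t :: real
  assumes "\<beta> \<ge> 1" "real m powr \<beta> \<le> t" "m \<le> M"
  shows "real m * ln 2 - 1 \<le> (\<Sum>n=1..M. log_factor (real n powr \<beta>) (- t))"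
proof -
  define \<psi> where "\<psi> n = ln (1 + t / real n powr \<beta>)" for n
  define corr where "corr n = 1 / (2 * (real n powr \<beta>)\<^sup>2)" for n
  have t: "0 \<le> t"
    using assms(2) powr_ge_zero[of "real m" \<beta>] by linarith
  have "real m * ln 2 = (\<Sum>n=1..m. ln 2)"
    by simp
  also have "\<dots> \<le> (\<Sum>n=1..m. \<psi> n)"
  proof (rule sum_mono)
    fix n assume n: "n \<in> {1..m}"
    then have "real n powr \<beta> \<le> real m powr \<beta>"
      using assms by (intro powr_mono2) auto
    with n assms(2) have "1 \<le> t / real n powr \<beta>"
      by simp
    then show "ln 2 \<le> \<psi> n"
      by (simp add: \<psi>_def)
  qed
  also have "\<dots> \<le> (\<Sum>n=1..M. \<psi> n)"
    using assms t by (intro sum_mono2) (auto simp: \<psi>_def)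
  also have "\<dots> - 1 \<le> (\<Sum>n=1..M. \<psi> n) - (\<Sum>n=1..M. corr n)"
    using sum_inverse_powr_sq_le[of \<beta> "{1..M}" M] assms by (simp add: corr_def)
  also have "\<dots> = (\<Sum>n=1..M. \<psi> n - corr n)"
    by (simp add: sum_subtractf)
  also have "\<dots> \<le> (\<Sum>n=1..M. log_factor (real n powr \<beta>) (- t))"
  proof (rule sum_mono)
    fix n assume "n \<in> {1..M}"
    then have a: "0 < real n powr \<beta>"
      by simp
    moreover have "- t < real n powr \<beta>"
      using a t by linarith
    ultimately show "\<psi> n - corr n \<le> log_factor (real n powr \<beta>) (- t)"
      using log_factor_ge_above[of "real n powr \<beta>" "- t"] by (simp add: \<psi>_def corr_def)
  qed
  finally show ?thesis
    by simp
qed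

lemma ln_norm_E_beta_neg_ge:
  fixes \<beta> t :: real
  assumes "\<beta> > 1" "t \<ge> 1"
  shows "ln 2 * (t powr (1 / \<beta>) - 1) - 1 \<le> ln (cmod (E_beta \<beta> (complex_of_real (- t))))"
proof -
  define T where "T = t powr (1 / \<beta>)"
  define m where "m = nat \<lfloor>T\<rfloor>"
  have T: "1 \<le> T" "T powr \<beta> = t"
    using assms by (auto simp: T_def ge_one_powr_ge_zero powr_powr)
  then have "real m = of_int \<lfloor>T\<rfloor>"
    by (simp add: m_def)
  then have m: "real m \<le> T" "T - 1 \<le> real m"
    using of_int_floor_le[of T] real_of_int_floor_add_one_gt[of T] by linarith+
  have "real m powr \<beta> \<le> T powr \<beta>"
    using m assms by (intro powr_mono2) auto
  then have "real m powr \<beta> \<le> t"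
    using T by simp
  have bound: "ln 2 * (T - 1) - 1 \<le> (\<Sum>n=1..M. log_factor (real n powr \<beta>) (- t))"
    if "m \<le> M" for M
  proof -
    have "ln 2 * (T - 1) \<le> real m * ln 2"
      using m by (simp add: mult.commute mult_left_mono)
    then show ?thesis
      using sum_log_factor_neg_ge[of \<beta> m t M] \<open>real m powr \<beta> \<le> t\<close> that assms by linarith
  qed
  show ?thesis
    unfolding T_def[symmetric]
    by (rule LIMSEQ_le_const[OF LIMSEQ_sum_log_factor_E_beta[OF assms(1)]]) (use bound in blast)
qed

lemma sum_powr_ratio_le:
  fixes p N :: real
  assumes "p > 0" "real j + 1 \<le> N"
  shows "(\<Sum>n=1..j. (real n / N) powr p) \<le> N / (p + 1)"
proof -
  have N: "N > 0"
    using assms by linarith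
  have "(\<Sum>n=1..j. (real n / N) powr p) = (\<Sum>n=1..j. real n powr p) / N powr p"
    by (simp add: powr_divide sum_divide_distrib)
  also have "\<dots> \<le> ((real j + 1) powr (p + 1) - 1) / (p + 1) / N powr p"
    using sum_powr_le[OF assms(1)] N by (intro divide_right_mono) auto
  also have "\<dots> \<le> N powr (p + 1) / (p + 1) / N powr p"
  proof -
    have "(real j + 1) powr (p + 1) \<le> N powr (p + 1)"
      using assms by (intro powr_mono2) auto
    then show ?thesis
      using assms by (intro divide_right_mono) auto
  qed
  also have "\<dots> = N / (p + 1)"
    using N by (simp add: powr_add)
  finally show ?thesis .
qed

lemma sum_powr_ratio_tail_le:
  fixes p N :: real
  assumes "p > 1" "0 < N" "N \<le> real j"
  shows "(\<Sum>n\<in>{j<..M}. (N / real n) powr p) \<le> N / (p - 1)"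
proof -
  have "j \<ge> 1"
    using assms by simp
  have "(\<Sum>n\<in>{j<..M}. (N / real n) powr p) = N powr p * (\<Sum>n\<in>{j<..M}. real n powr (- p))"
    using assms by (simp add: sum_distrib_left powr_divide powr_minus_divide)
  also have "\<dots> \<le> N powr p * (real j powr (1 - p) / (p - 1))"
    using sum_powr_neg_tail_le[OF assms(1) \<open>j \<ge> 1\<close>] by (intro mult_left_mono) auto
  also have "\<dots> \<le> N powr p * (N powr (1 - p) / (p - 1))"
    using assms by (intro mult_left_mono divide_right_mono powr_mono2') auto
  also have "\<dots> = N / (p - 1)"
    using assms by (simp add: powr_add[symmetric])
  finally show ?thesis .
qed

lemma sum_ln_ratio_ge:
  fixes N :: real
  assumes "real j + 1 \<le> N" "N < real j + 2"
  shows "N - 2 - ln N \<le> (\<Sum>n=1..j. ln N - ln (real n))"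
proof -
  have "(real j + 1) * ln (real j + 1) \<le> (real j + 1) * ln N"
    using assms by (intro mult_left_mono) auto
  then have "(\<Sum>n=1..j. ln (real n)) \<le> real j * ln N + ln N - real j"
    using sum_ln_le[of j] by (simp add: algebra_simps)
  then show ?thesis
    using assms by (simp add: sum_subtractf)
qed

lemma sum_ln_one_minus_powr_ratio_ge:
  fixes \<beta> N :: real
  assumes "\<beta> > 2" "real j + 1 \<le> N" "N \<le> real j + 2"
  shows "- (N * cot_pf_sum \<beta>) \<le>
    (\<Sum>n=1..j. ln (1 - (real n / N) powr \<beta>)) + (\<Sum>n\<in>{j + 2<..M}. ln (1 - (N / real n) powr \<beta>))"
proof -
  define z where "z n = (if n \<le> j then real n / N else N / real n) powr \<beta>" for n
  define c where "c k = N * (2 * \<beta> / ((\<beta> * real (Suc k))\<^sup>2 - 1))" for k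
  have N: "N > 0"
    using assms by linarith
  have disjoint: "{1..j} \<inter> {j + 2<..M} = {}"
    by auto
  have z_bounds: "0 \<le> z n \<and> z n < 1" if "n \<in> {1..j} \<union> {j + 2<..M}" for n
  proof -
    have "0 \<le> (if n \<le> j then real n / N else N / real n)" "(if n \<le> j then real n / N else N / real n) < 1"
      using that assms N by (auto simp: field_simps)
    then have "(if n \<le> j then real n / N else N / real n) powr \<beta> < 1 powr \<beta>"
      using assms by (intro powr_less_mono2) auto
    then show ?thesis
      by (simp add: z_def)
  qed
  have moments: "(\<Sum>n\<in>{1..j} \<union> {j + 2<..M}. z n ^ Suc k) / real (Suc k) \<le> c k" for k
  proof -
    define p where "p = \<beta> * real (Suc k)"
    have "\<beta> * 1 \<le> p"
      using assms unfolding p_def by (intro mult_left_mono) auto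
    then have p: "p > 1"
      using assms by linarith
    have "z n ^ Suc k = (if n \<le> j then real n / N else N / real n) powr p" if "n \<ge> 1" for n
      unfolding z_def p_def mult.commute[of \<beta>] by (rule powr_power) (use that N in auto)
    then have "(\<Sum>n\<in>{1..j} \<union> {j + 2<..M}. z n ^ Suc k)
        = (\<Sum>n=1..j. (real n / N) powr p) + (\<Sum>n\<in>{j + 2<..M}. (N / real n) powr p)"
      using disjoint by (simp add: sum.union_disjoint)
    also have "\<dots> \<le> N / (p + 1) + N / (p - 1)"
      using assms p N by (intro add_mono sum_powr_ratio_le sum_powr_ratio_tail_le) auto
    also have "\<dots> = real (Suc k) * c k"
      using p unfolding c_def p_def by (simp add: field_simps power2_eq_square)
    finally show ?thesis
      by (simp add: field_simps)
  qed
  have "summable c"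
    unfolding c_def using summable_cot_pf[OF assms(1)] by (rule summable_mult)
  then have "- (\<Sum>k. c k) \<le> (\<Sum>n\<in>{1..j} \<union> {j + 2<..M}. ln (1 - z n))"
    using z_bounds moments by (intro sum_ln_one_minus_ge) auto
  moreover have "(\<Sum>k. c k) = N * cot_pf_sum \<beta>"
    unfolding c_def cot_pf_sum_def using summable_cot_pf[OF assms(1)] by (rule suminf_mult)
  ultimately show ?thesis
    using disjoint by (simp add: sum.union_disjoint z_def)
qed

lemma log_factor_powr_below_ge:
  fixes \<beta> N :: real
  assumes "\<beta> > 0" "1 \<le> n" "real n < N"
  shows "\<beta> * (ln N - ln (real n)) + ln (1 - (real n / N) powr \<beta>) - 1 / (2 * (real n powr \<beta>)\<^sup>2)
    \<le> log_factor (real n powr \<beta>) (N powr \<beta>)"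
proof -
  have "real n powr \<beta> < N powr \<beta>"
    using assms by (intro powr_less_mono2) auto
  moreover have "ln (N powr \<beta>) - ln (real n powr \<beta>) = \<beta> * (ln N - ln (real n))"
    using assms by (simp add: ln_powr algebra_simps)
  moreover have "real n powr \<beta> / N powr \<beta> = (real n / N) powr \<beta>"
    using assms by (simp add: powr_divide)
  ultimately show ?thesis
    using log_factor_ge_below[of "real n powr \<beta>" "N powr \<beta>"] assms by simp
qed

lemma log_factor_powr_above_ge:
  fixes \<beta> N :: real
  assumes "\<beta> > 0" "0 < N" "N < real n"
  shows "ln (1 - (N / real n) powr \<beta>) - 1 / (2 * (real n powr \<beta>)\<^sup>2) \<le> log_factor (real n powr \<beta>) (N powr \<beta>)"
proof -
  have "N powr \<beta> < real n powr \<beta>"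
    using assms by (intro powr_less_mono2) auto
  moreover have "N powr \<beta> / real n powr \<beta> = (N / real n) powr \<beta>"
    using assms by (simp add: powr_divide)
  ultimately show ?thesis
    using log_factor_ge_above[of "real n powr \<beta>" "N powr \<beta>"] assms by simp
qed

lemma log_factor_powr_near_ge:
  fixes \<beta> N :: real
  assumes "\<beta> > 0" "0 < N" "real n \<le> 2 * N"
  shows "- ln (2 powr \<beta> * N powr \<beta> + 1) \<le> log_factor (real n powr \<beta>) (N powr \<beta>)"
proof -
  have "real n powr \<beta> \<le> (2 * N) powr \<beta>"
    using assms by (intro powr_mono2) auto
  then have "real n powr \<beta> + 1 \<le> 2 powr \<beta> * N powr \<beta> + 1"
    using assms by (simp add: powr_mult)
  then have "ln (real n powr \<beta> + 1) \<le> ln (2 powr \<beta> * N powr \<beta> + 1)"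
    by (subst ln_le_cancel_iff) (auto intro: add_nonneg_pos)
  then show ?thesis
    using log_factor_ge_neg_ln[of "real n powr \<beta>" "N powr \<beta>"] by simp
qed

lemma sum_log_factor_pos_ge:
  fixes \<beta> N :: real
  assumes "\<beta> > 2" "real j + 1 \<le> N" "N < real j + 2" "j + 2 \<le> M"
  shows "(\<beta> - cot_pf_sum \<beta>) * N - \<beta> * (2 + ln N) - 1 - 2 * ln (2 powr \<beta> * N powr \<beta> + 1)
    \<le> (\<Sum>n=1..M. log_factor (real n powr \<beta>) (N powr \<beta>))"
proof -
  define g where "g n = log_factor (real n powr \<beta>) (N powr \<beta>)" for n
  define corr where "corr n = 1 / (2 * (real n powr \<beta>)\<^sup>2)" for n
  have "{1..M} = ({1..j} \<union> {j + 2<..M}) \<union> {j + 1, j + 2}"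
    using assms by auto
  then have "(\<Sum>n=1..M. g n) = (\<Sum>n\<in>{1..j} \<union> {j + 2<..M}. g n) + (g (j + 1) + g (j + 2))"
    by (simp only:) (subst sum.union_disjoint; auto)
  also have "(\<Sum>n\<in>{1..j} \<union> {j + 2<..M}. g n) = (\<Sum>n=1..j. g n) + (\<Sum>n\<in>{j + 2<..M}. g n)"
    by (rule sum.union_disjoint) auto
  finally have split: "(\<Sum>n=1..M. g n) = (\<Sum>n=1..j. g n) + (g (j + 1) + g (j + 2)) + (\<Sum>n\<in>{j + 2<..M}. g n)"
    by simp
  have "(\<Sum>n=1..j. \<beta> * (ln N - ln (real n)) + ln (1 - (real n / N) powr \<beta>) - corr n) \<le> (\<Sum>n=1..j. g n)"
    using assms unfolding g_def corr_def by (intro sum_mono log_factor_powr_below_ge) auto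
  then have head: "\<beta> * (\<Sum>n=1..j. ln N - ln (real n)) + (\<Sum>n=1..j. ln (1 - (real n / N) powr \<beta>))
      - (\<Sum>n=1..j. corr n) \<le> (\<Sum>n=1..j. g n)"
    by (simp add: sum.distrib sum_subtractf flip: sum_distrib_left)
  have "(\<Sum>n\<in>{j + 2<..M}. ln (1 - (N / real n) powr \<beta>) - corr n) \<le> (\<Sum>n\<in>{j + 2<..M}. g n)"
    using assms unfolding g_def corr_def by (intro sum_mono log_factor_powr_above_ge) auto
  then have tail: "(\<Sum>n\<in>{j + 2<..M}. ln (1 - (N / real n) powr \<beta>)) - (\<Sum>n\<in>{j + 2<..M}. corr n)
      \<le> (\<Sum>n\<in>{j + 2<..M}. g n)"
    by (simp add: sum_subtractf)
  have middle: "- ln (2 powr \<beta> * N powr \<beta> + 1) \<le> g n" if "n \<le> j + 2" for n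
    using assms that unfolding g_def by (intro log_factor_powr_near_ge) auto
  have "(\<Sum>n=1..j. corr n) + (\<Sum>n\<in>{j + 2<..M}. corr n) = (\<Sum>n\<in>{1..j} \<union> {j + 2<..M}. corr n)"
    by (rule sum.union_disjoint[symmetric]) auto
  also have "\<dots> \<le> 1"
    unfolding corr_def using assms by (intro sum_inverse_powr_sq_le[where M = M]) auto
  finally have corrections: "(\<Sum>n=1..j. corr n) + (\<Sum>n\<in>{j + 2<..M}. corr n) \<le> 1" .
  have "\<beta> * (N - 2 - ln N) \<le> \<beta> * (\<Sum>n=1..j. ln N - ln (real n))"
    using sum_ln_ratio_ge[of j N] assms by (intro mult_left_mono) auto
  moreover have "- (N * cot_pf_sum \<beta>) \<le>
      (\<Sum>n=1..j. ln (1 - (real n / N) powr \<beta>)) + (\<Sum>n\<in>{j + 2<..M}. ln (1 - (N / real n) powr \<beta>))"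
    using assms by (intro sum_ln_one_minus_powr_ratio_ge) auto
  moreover have "(\<beta> - cot_pf_sum \<beta>) * N - \<beta> * (2 + ln N) = \<beta> * (N - 2 - ln N) - N * cot_pf_sum \<beta>"
    by (simp add: algebra_simps)
  ultimately show ?thesis
    using split head tail corrections middle[of "j + 1"] middle[of "j + 2"] unfolding g_def by linarith
qed

lemma ln_norm_E_beta_pos_ge:
  fixes \<beta> x :: real
  assumes "\<beta> > 2" "x \<ge> 1"
  shows "(\<beta> - cot_pf_sum \<beta>) * x powr (1 / \<beta>) - \<beta> * (2 + ln (x powr (1 / \<beta>))) - 1
    - 2 * ln (2 powr \<beta> * x + 1) \<le> ln (cmod (E_beta \<beta> (complex_of_real x)))"
proof -
  define N where "N = x powr (1 / \<beta>)"
  define j where "j = nat \<lfloor>N - 1\<rfloor>"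
  have N: "1 \<le> N" "N powr \<beta> = x"
    using assms by (auto simp: N_def ge_one_powr_ge_zero powr_powr)
  then have "real j = of_int \<lfloor>N - 1\<rfloor>"
    by (simp add: j_def)
  then have j: "real j + 1 \<le> N" "N < real j + 2"
    using of_int_floor_le[of "N - 1"] real_of_int_floor_add_one_gt[of "N - 1"] by linarith+
  have "(\<beta> - cot_pf_sum \<beta>) * N - \<beta> * (2 + ln N) - 1 - 2 * ln (2 powr \<beta> * x + 1)
      \<le> (\<Sum>n=1..M. log_factor (real n powr \<beta>) x)" if "j + 2 \<le> M" for M
    using sum_log_factor_pos_ge[OF assms(1) j that] N by simp
  then show ?thesis
    unfolding N_def[symmetric] using assms(1)
    by (intro LIMSEQ_le_const[OF LIMSEQ_sum_log_factor_E_beta]) auto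
qed

lemma eventually_ln_norm_E_beta_pos_ge:
  fixes \<beta> :: real
  assumes "\<beta> > 2"
  shows "\<forall>\<^sub>F x in at_top. (\<beta> - cot_pf_sum \<beta>) / 2 * x powr (1 / \<beta>) \<le> ln (cmod (E_beta \<beta> (complex_of_real x)))"
proof -
  have "0 < \<beta> - cot_pf_sum \<beta>"
    using cot_pf_sum_less[OF assms] by simp
  then have "\<forall>\<^sub>F x in at_top. (\<beta> - cot_pf_sum \<beta>) / 2 * x powr (1 / \<beta>) \<le> (\<beta> - cot_pf_sum \<beta>) * x powr (1 / \<beta>)
      - \<beta> * (2 + ln (x powr (1 / \<beta>))) - 1 - 2 * ln (2 powr \<beta> * x + 1)"
    using assms by real_asymp
  with eventually_ge_at_top[of 1] show ?thesis
  proof eventually_elim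
    case (elim x)
    then show ?case
      using ln_norm_E_beta_pos_ge[OF assms elim(1)] by linarith
  qed
qed

lemma eventually_ln_norm_E_beta_neg_ge:
  fixes \<beta> :: real
  assumes "\<beta> > 1"
  shows "\<forall>\<^sub>F t in at_top. ln 2 / 2 * t powr (1 / \<beta>) \<le> ln (cmod (E_beta \<beta> (complex_of_real (- t))))"
proof -
  have "\<forall>\<^sub>F t in at_top. ln 2 / 2 * t powr (1 / \<beta>) \<le> ln 2 * (t powr (1 / \<beta>) - 1) - 1"
    using assms by real_asymp
  with eventually_ge_at_top[of 1] show ?thesis
  proof eventually_elim
    case (elim t)
    then show ?case
      using ln_norm_E_beta_neg_ge[OF assms elim(1)] by linarith
  qed
qed

lemma ln_norm_E_beta_ge:
  fixes \<beta> :: real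
  assumes "\<beta> > 2"
  obtains C R where "C > 0"
    "\<And>x. R \<le> \<bar>x\<bar> \<Longrightarrow> C * \<bar>x\<bar> powr (1 / \<beta>) \<le> ln (cmod (E_beta \<beta> (complex_of_real x)))"
proof -
  define C where "C = min ((\<beta> - cot_pf_sum \<beta>) / 2) (ln 2 / 2)"
  have C: "C \<le> (\<beta> - cot_pf_sum \<beta>) / 2" "C \<le> ln 2 / 2"
    unfolding C_def by (rule min.cobounded1, rule min.cobounded2)
  have "0 < C"
    using cot_pf_sum_less[OF assms] by (simp add: C_def)
  have "\<beta> > 1"
    using assms by simp
  obtain R where
    pos: "\<And>x. R \<le> x \<Longrightarrow> (\<beta> - cot_pf_sum \<beta>) / 2 * x powr (1 / \<beta>) \<le> ln (cmod (E_beta \<beta> (complex_of_real x)))" and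
    neg: "\<And>t. R \<le> t \<Longrightarrow> ln 2 / 2 * t powr (1 / \<beta>) \<le> ln (cmod (E_beta \<beta> (complex_of_real (- t))))"
    using eventually_conj[OF eventually_ln_norm_E_beta_pos_ge[OF assms] eventually_ln_norm_E_beta_neg_ge[OF \<open>\<beta> > 1\<close>]]
    unfolding eventually_at_top_linorder by blast
  have "C * \<bar>x\<bar> powr (1 / \<beta>) \<le> ln (cmod (E_beta \<beta> (complex_of_real x)))" if "R \<le> \<bar>x\<bar>" for x
  proof (cases "x \<ge> 0")
    case True
    have "C * x powr (1 / \<beta>) \<le> (\<beta> - cot_pf_sum \<beta>) / 2 * x powr (1 / \<beta>)"
      using C by (intro mult_right_mono) auto
    also have "\<dots> \<le> ln (cmod (E_beta \<beta> (complex_of_real x)))"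
      using pos[of x] that True by simp
    finally show ?thesis
      using True by simp
  next
    case False
    have "C * (- x) powr (1 / \<beta>) \<le> ln 2 / 2 * (- x) powr (1 / \<beta>)"
      using C by (intro mult_right_mono) auto
    also have "\<dots> \<le> ln (cmod (E_beta \<beta> (complex_of_real (- (- x)))))"
      using neg[of "- x"] that False by simp
    finally show ?thesis
      using False by simp
  qed
  with \<open>0 < C\<close> show ?thesis
    by (rule that)
qed

theorem lemma5p2:
  fixes \<beta> :: real
  assumes "\<beta> > 2"
  shows "\<exists>C1 C2 R. 0 < C1 \<and> C1 \<le> C2 \<and> R > 0 \<and>
    (\<forall>x::real. \<bar>x\<bar> > R \<longrightarrow>
       C1 * \<bar>x\<bar> powr (1 / \<beta>) \<le> ln (cmod (E_beta \<beta> (complex_of_real x))) \<and>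
       ln (cmod (E_beta \<beta> (complex_of_real x))) \<le> C2 * \<bar>x\<bar> powr (1 / \<beta>))"
proof -
  obtain C1 R where "C1 > 0" and lower:
    "\<And>x. R \<le> \<bar>x\<bar> \<Longrightarrow> C1 * \<bar>x\<bar> powr (1 / \<beta>) \<le> ln (cmod (E_beta \<beta> (complex_of_real x)))"
    using ln_norm_E_beta_ge[OF assms] by blast
  define C2 where "C2 = max C1 (ln 2 + \<beta> + 2 powr (\<beta> - 1) / (\<beta> - 1))"
  have upper: "ln (cmod (E_beta \<beta> (complex_of_real x))) \<le> C2 * \<bar>x\<bar> powr (1 / \<beta>)"
    if "1 \<le> \<bar>x\<bar>" for x
  proof -
    have "ln (cmod (E_beta \<beta> (complex_of_real x)))
        \<le> (ln 2 + \<beta> + 2 powr (\<beta> - 1) / (\<beta> - 1)) * \<bar>x\<bar> powr (1 / \<beta>)"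
      using assms that by (intro ln_norm_E_beta_le) auto
    also have "\<dots> \<le> C2 * \<bar>x\<bar> powr (1 / \<beta>)"
      by (intro mult_right_mono) (auto simp: C2_def)
    finally show ?thesis .
  qed
  show ?thesis
    using \<open>C1 > 0\<close> lower upper
    by (intro exI[of _ C1] exI[of _ C2] exI[of _ "max 1 R"]) (auto simp: C2_def)
qed

end
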